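(* Let $\mathbb F$ be an algebraically closed field, and let $p_1,\dots,p_m\in\mathbb F[x]$ be polynomials such that $\{1,p_1,\dots,p_m\}$ is linearly independent over $\mathbb F$. Then the polynomial map $L:\mathbb F\to\mathbb F^m$, $x\mapsto(p_1(x),\dots,p_m(x))$, is $(m-1,1)$-elusive. In particular the moment curve $x\mapsto(x,x^2,\dots,x^m)$ is $(m-1,1)$-elusive.
   Context: A polynomial map $M=(M_1,\dots,M_m)$ has degree $d$ if each $M_i$ has degree at most $d$. $L:\mathbb F^n\to\mathbb F^m$ is $(r,d)$-elusive if for every polynomial map $M:\mathbb F^r\to\mathbb F^m$ of degree $d$, $\mathrm{im}(L)\not\subseteq\mathrm{im}(M)$. *)

theory Defs
  imports "HOL-Computational_Algebra.Polynomial"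
begin

text \<open>Points of F^r are lists of length r.\<close>

definition mpoly_fun_deg :: "nat \<Rightarrow> nat \<Rightarrow> ('a::comm_ring_1 list \<Rightarrow> 'a) \<Rightarrow> bool" where
  "mpoly_fun_deg r d f \<longleftrightarrow>
     (\<exists>c :: nat list \<Rightarrow> 'a. \<forall>xs. length xs = r \<longrightarrow>
        f xs = (\<Sum>\<alpha>\<in>{\<alpha>. length \<alpha> = r \<and> sum_list \<alpha> \<le> d}. c \<alpha> * (\<Prod>i<r. (xs ! i) ^ (\<alpha> ! i))))"

definition poly_map :: "nat \<Rightarrow> nat \<Rightarrow> nat \<Rightarrow> ('a::comm_ring_1 list \<Rightarrow> 'a list) \<Rightarrow> bool" where
  "poly_map r m d M \<longleftrightarrow>
     (\<exists>fs. length fs = m \<and> (\<forall>f\<in>set fs. mpoly_fun_deg r d f) \<and>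
           (\<forall>ys. length ys = r \<longrightarrow> M ys = map (\<lambda>f. f ys) fs))"

definition elusive :: "nat \<Rightarrow> nat \<Rightarrow> nat \<Rightarrow> nat \<Rightarrow> ('a::comm_ring_1 list \<Rightarrow> 'a list) \<Rightarrow> bool" where
  "elusive n m r d L \<longleftrightarrow>
     (\<forall>M. poly_map r m d M \<longrightarrow>
        \<not> (L ` {xs. length xs = n} \<subseteq> M ` {ys. length ys = r}))"

text \<open>The map F -> F^m, x |-> (p_1(x),...,p_m(x)), viewed on F^1.\<close>

definition poly_curve :: "'a::comm_ring_1 poly list \<Rightarrow> 'a list \<Rightarrow> 'a list" where
  "poly_curve ps xs = map (\<lambda>p. poly p (hd xs)) ps"

end

theory Submission
  imports Defs "Jordan_Normal_Form.Determinant"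
begin

text \<open>A polynomial map of degree 1 from F^(m-1) to F^m is affine, and the linear parts of
  its m coordinates, being m vectors in F^(m-1), are linearly dependent: some nontrivial
  combination v_1 M_1 + ... + v_m M_m is a constant C. If the curve lay in the image of M, the
  polynomial v_1 p_1 + ... + v_m p_m - C would vanish on all of F, hence be zero because an
  algebraically closed field is infinite, contradicting the independence of 1, p_1, ..., p_m.\<close>

hide_const (open) Module.module.smult \<comment> \<open>otherwise it captures the polynomial \<open>smult\<close>\<close>

definition unit_exponents :: "nat \<Rightarrow> nat \<Rightarrow> nat list" where
  "unit_exponents r j = (replicate r 0)[j := 1]"

lemma exponents_sum_le_1:
  "{\<alpha>::nat list. length \<alpha> = r \<and> sum_list \<alpha> \<le> 1} =
     insert (replicate r 0) (unit_exponents r ` {..<r})"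
proof (intro equalityI subsetI)
  fix \<alpha> :: "nat list" assume "\<alpha> \<in> {\<alpha>. length \<alpha> = r \<and> sum_list \<alpha> \<le> 1}"
  hence len: "length \<alpha> = r" and sum_le: "(\<Sum>i<r. \<alpha> ! i) \<le> 1"
    by (auto simp: sum_list_sum_nth atLeast0LessThan)
  show "\<alpha> \<in> insert (replicate r 0) (unit_exponents r ` {..<r})"
  proof (cases "\<alpha> = replicate r 0")
    case False
    then obtain j where j: "j < r" "\<alpha> ! j \<noteq> 0"
      using len by (metis nth_equalityI length_replicate nth_replicate)
    have aj: "\<alpha> ! j = 1"
      using member_le_sum[of j "{..<r}" "(!) \<alpha>"] j sum_le by simp
    have "\<alpha> ! i = 0" if "i < r" "i \<noteq> j" for i
      using sum_mono2[of "{..<r}" "{i, j}" "(!) \<alpha>"] that j aj sum_le by simp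
    hence "\<alpha> = unit_exponents r j"
      using len j aj by (intro nth_equalityI) (auto simp: unit_exponents_def nth_list_update)
    thus ?thesis using j by blast
  qed simp
qed (auto simp: unit_exponents_def sum_list_replicate sum_list_update)

lemma monomial_unit_exponents:
  assumes "j < r" "length xs = r"
  shows "(\<Prod>i<r. (xs ! i) ^ (unit_exponents r j ! i)) = xs ! j"
  using assms by (simp add: unit_exponents_def nth_list_update if_distrib prod.If_cases
        lessThan_def Collect_conj_eq[symmetric])

lemma mpoly_fun_deg_1_affine:
  fixes f :: "'a::comm_ring_1 list \<Rightarrow> 'a"
  assumes "mpoly_fun_deg r 1 f"
  obtains a b where "\<And>xs. length xs = r \<Longrightarrow> f xs = a + (\<Sum>j<r. b j * xs ! j)"
proof -
  obtain c where c: "\<And>xs. length xs = r \<Longrightarrow>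
      f xs = (\<Sum>\<alpha>\<in>{\<alpha>. length \<alpha> = r \<and> sum_list \<alpha> \<le> 1}. c \<alpha> * (\<Prod>i<r. (xs ! i) ^ (\<alpha> ! i)))"
    using assms unfolding mpoly_fun_deg_def by blast
  have nth_unit: "unit_exponents r j ! j = 1" if "j < r" for j
    using that by (simp add: unit_exponents_def)
  have inj: "inj_on (unit_exponents r) {..<r}"
    by (rule inj_onI) (metis nth_unit lessThan_iff nth_list_update_neq nth_replicate
        unit_exponents_def zero_neq_one)
  have zero_notin: "replicate r 0 \<notin> unit_exponents r ` {..<r}"
  proof
    assume "replicate r 0 \<in> unit_exponents r ` {..<r}"
    then obtain j where "j < r" "replicate r 0 = unit_exponents r j" by blast
    with nth_unit[of j] show False by (metis nth_replicate zero_neq_one)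
  qed
  have "f xs = c (replicate r 0) + (\<Sum>j<r. c (unit_exponents r j) * xs ! j)"
    if "length xs = r" for xs
    unfolding c[OF that] exponents_sum_le_1
    using that inj zero_notin by (simp add: sum.reindex monomial_unit_exponents)
  thus thesis by (rule that)
qed

lemma exists_nonzero_solution_underdetermined:
  fixes g :: "nat \<Rightarrow> nat \<Rightarrow> 'a::field"
  assumes "n < m"
  obtains v where "\<exists>k<m. v k \<noteq> 0" "\<And>j. j < n \<Longrightarrow> (\<Sum>k<m. g j k * v k) = 0"
proof -
  define B where "B = mat\<^sub>r m m (\<lambda>j. if j = m - 1 then 0\<^sub>v m else vec m (g j))"
  have B: "B \<in> carrier_mat m m" by (simp add: B_def)
  have "det B = 0" unfolding B_def
    by (rule det_row_0) (use assms in auto)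
  then obtain w where w: "w \<in> carrier_vec m" "w \<noteq> 0\<^sub>v m" "B *\<^sub>v w = 0\<^sub>v m"
    using det_0_iff_vec_prod_zero_field[OF B] by blast
  have "\<exists>k<m. w $ k \<noteq> 0"
    using w(1,2) by (metis eq_vecI carrier_vecD index_zero_vec)
  moreover have "(\<Sum>k<m. g j k * w $ k) = 0" if "j < n" for j
  proof -
    have "(B *\<^sub>v w) $ j = (\<Sum>k<m. g j k * w $ k)"
      using that assms w(1) by (simp add: B_def scalar_prod_def atLeast0LessThan)
    thus ?thesis using w(3) that assms by simp
  qed
  ultimately show thesis by (rule that)
qed

lemma affine_functions_dependent:
  fixes f :: "nat \<Rightarrow> 'a::field list \<Rightarrow> 'a"
  assumes "r < m" "\<And>k. k < m \<Longrightarrow> mpoly_fun_deg r 1 (f k)"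
  obtains v C where "\<exists>k<m. v k \<noteq> 0"
    "\<And>ys. length ys = r \<Longrightarrow> (\<Sum>k<m. v k * f k ys) = C"
proof -
  have "\<forall>k<m. \<exists>a b. \<forall>xs. length xs = r \<longrightarrow> f k xs = a + (\<Sum>j<r. b j * xs ! j)"
    using assms(2) mpoly_fun_deg_1_affine by metis
  then obtain a b where ab: "\<And>k xs. k < m \<Longrightarrow> length xs = r \<Longrightarrow>
      f k xs = a k + (\<Sum>j<r. b k j * xs ! j)"
    by metis
  obtain v where v: "\<exists>k<m. v k \<noteq> 0" "\<And>j. j < r \<Longrightarrow> (\<Sum>k<m. b k j * v k) = 0"
    using exists_nonzero_solution_underdetermined[OF assms(1), of "\<lambda>j k. b k j"] by blast
  have "(\<Sum>k<m. v k * f k ys) = (\<Sum>k<m. v k * a k)" if "length ys = r" for ys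
  proof -
    have "(\<Sum>k<m. v k * f k ys) = (\<Sum>k<m. v k * a k) + (\<Sum>j<r. (\<Sum>k<m. b k j * v k) * ys ! j)"
      using that by (simp add: ab distrib_left sum.distrib sum_distrib_left sum_distrib_right
          sum.swap[of _ "{..<m}"] mult_ac)
    thus ?thesis using v(2) by simp
  qed
  with v(1) show thesis by (rule that)
qed

lemma alg_closed_poly_vanishing_eq_0:
  fixes q :: "'a::alg_closed_field poly"
  assumes "\<And>x. poly q x = 0"
  shows "q = 0"
proof (rule ccontr)
  \<comment> \<open>a nonconstant \<open>q\<close> makes \<open>q + 1\<close> nonconstant, yet it would be the constant 1\<close>
  assume "q \<noteq> 0"
  then have "degree q > 0"
    using assms[of 0] by (metis degree_0_id gr0I poly_0_coeff_0 pCons_0_0)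
  then have "degree (q + 1) > 0"
    by (simp add: degree_add_eq_left)
  then obtain x where "poly (q + 1) x = 0"
    using alg_closed_imp_poly_has_root by blast
  with assms[of x] show False by simp
qed

lemma elusive_poly_curve:
  fixes ps :: "'a::alg_closed_field poly list"
  assumes m: "m \<ge> 1" and len: "length ps = m"
    and indep: "\<forall>c0 (cs :: 'a list). length cs = m \<longrightarrow>
           [:c0:] + (\<Sum>i<m. smult (cs ! i) (ps ! i)) = 0 \<longrightarrow>
           c0 = 0 \<and> (\<forall>i<m. cs ! i = 0)"
  shows "elusive 1 m (m - 1) 1 (poly_curve ps)"
  unfolding elusive_def
proof (intro allI impI notI)
  fix M :: "'a list \<Rightarrow> 'a list"
  assume "poly_map (m - 1) m 1 M"
    and image: "poly_curve ps ` {xs. length xs = 1} \<subseteq> M ` {ys. length ys = m - 1}"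
  then obtain fs where fs: "length fs = m" "\<forall>f\<in>set fs. mpoly_fun_deg (m - 1) 1 f"
    "\<And>ys. length ys = m - 1 \<Longrightarrow> M ys = map (\<lambda>f. f ys) fs"
    unfolding poly_map_def by blast
  have "mpoly_fun_deg (m - 1) 1 (fs ! k)" if "k < m" for k
    using that fs(1,2) by simp
  moreover have "m - 1 < m" using m by simp
  ultimately obtain v C where v: "\<exists>k<m. v k \<noteq> 0"
    and relation: "\<And>ys. length ys = m - 1 \<Longrightarrow> (\<Sum>k<m. v k * (fs ! k) ys) = C"
    using affine_functions_dependent by blast
  define cs where "cs = map v [0..<m]"
  define q where "q = [:-C:] + (\<Sum>i<m. smult (cs ! i) (ps ! i))"
  have "poly q x = 0" for x
  proof -
    have "poly_curve ps [x] \<in> M ` {ys. length ys = m - 1}"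
      using image by auto
    then obtain ys where ys: "length ys = m - 1" "poly_curve ps [x] = M ys"
      by auto
    have "poly (ps ! k) x = (fs ! k) ys" if "k < m" for k
      using arg_cong[OF ys(2), of "\<lambda>zs. zs ! k"] that len fs(1) fs(3)[OF ys(1)]
      by (simp add: poly_curve_def)
    hence "(\<Sum>k<m. v k * poly (ps ! k) x) = C"
      using relation[OF ys(1)] by simp
    thus ?thesis by (simp add: q_def poly_sum cs_def)
  qed
  hence "q = 0" by (rule alg_closed_poly_vanishing_eq_0)
  hence "\<forall>i<m. cs ! i = 0"
    using indep[rule_format, of cs "-C"] unfolding q_def by (simp add: cs_def)
  with v show False by (auto simp: cs_def)
qed

lemma moment_curve_affinely_independent:
  "\<forall>c0 (cs :: 'a::comm_ring_1 list). length cs = m \<longrightarrow>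
     [:c0:] + (\<Sum>i<m. smult (cs ! i) (map (\<lambda>i. monom 1 (Suc i)) [0..<m] ! i)) = 0 \<longrightarrow>
     c0 = 0 \<and> (\<forall>i<m. cs ! i = 0)"
proof (intro allI impI)
  fix c0 :: 'a and cs :: "'a list"
  assume "[:c0:] + (\<Sum>i<m. smult (cs ! i) (map (\<lambda>i. monom 1 (Suc i)) [0..<m] ! i)) = 0"
  also have "(\<Sum>i<m. smult (cs ! i) (map (\<lambda>i. monom 1 (Suc i)) [0..<m] ! i)) =
      (\<Sum>i<m. monom (cs ! i) (Suc i))"
    by (rule sum.cong) (auto simp: smult_monom)
  finally have q: "[:c0:] + (\<Sum>i<m. monom (cs ! i) (Suc i)) = 0" .
  have "c0 = 0"
    using arg_cong[OF q, of "\<lambda>p. coeff p 0"] by (simp add: coeff_sum)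
  moreover have "cs ! j = 0" if "j < m" for j
    using arg_cong[OF q, of "\<lambda>p. coeff p (Suc j)"] that by (simp add: coeff_sum coeff_monom)
  ultimately show "c0 = 0 \<and> (\<forall>i<m. cs ! i = 0)" by blast
qed

theorem proposition9p5:
  fixes ps :: "'a::alg_closed_field poly list" and m :: nat
  assumes "m \<ge> 1"
    and "length ps = m"
    and "\<forall>c0 (cs :: 'a list). length cs = m \<longrightarrow>
           [:c0:] + (\<Sum>i<m. smult (cs ! i) (ps ! i)) = 0 \<longrightarrow>
           c0 = 0 \<and> (\<forall>i<m. cs ! i = 0)"
  shows "elusive 1 m (m - 1) 1 (poly_curve ps) \<and>
         elusive 1 m (m - 1) 1
           (poly_curve (map (\<lambda>i. monom (1::'a) (Suc i)) [0..<m]))"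
  using elusive_poly_curve[OF assms]
    elusive_poly_curve[OF assms(1) _ moment_curve_affinely_independent] by simp

end
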